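(* For all integers $m\ge1$ and $j\ge0$, \[b_{\mathcal{G}}(m,m+j,1)=b_{\mathcal{G}}(m,m+j,\bar1)=q^{\binom{m+1}{2}+\binom{j+1}{2}}{m-1\brack j}.\]
   Context: An overpartition is a partition in which the first occurrence of each part size may be overlined, with parts listed in non-increasing order with respect to $1<\bar1<2<\bar2<\cdots$. A part is of size $t$ if it is $t$ or $\bar t$, and $|\pi|$ is the sum of the sizes of the parts. For $m\ge1$, $\mathcal{G}(m)$ is the set of overpartitions $(\pi_1,\dots,\pi_m)$ such that for every $1\le i<m$, if $\pi_{i+1}$ has size $t$ then $\pi_i\in\{\overline{t+1},\,t+2\}$. $b_{\mathcal{G}}(m,j,1)$ (resp. $b_{\mathcal{G}}(m,j,\bar1)$) is $\sum q^{|\pi|}$ over $\pi\in\mathcal{G}(m)$ whose largest part has size $j$ and whose smallest part is $1$ (resp. $\bar1$). The Gaussian binomial is ${M\brack N}=\frac{(q;q)_M}{(q;q)_N(q;q)_{M-N}}$ for $0\le N\le M$ and $0$ otherwise, where $(q;q)_n=\prod_{i=1}^n(1-q^i)$. *)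

theory Defs
  imports "HOL-Computational_Algebra.Formal_Power_Series"
begin

text \<open>A part of an overpartition is a pair (t, ov): t is its size (t >= 1) and
  ov says whether it is overlined. Parts are listed in non-increasing order w.r.t.
  1 < 1bar < 2 < 2bar < ..., encoded by the key 2*t + (1 if overlined).\<close>

type_synonym opart = "nat \<times> bool"

definition part_key :: "opart \<Rightarrow> nat" where
  "part_key p = 2 * fst p + (if snd p then 1 else 0)"

definition overpartition :: "opart list \<Rightarrow> bool" where
  "overpartition ps \<longleftrightarrow>
     (\<forall>p\<in>set ps. fst p \<ge> 1) \<and>
     sorted_wrt (\<lambda>a b. part_key a \<ge> part_key b) ps \<and>
     (\<forall>i j. i < j \<and> j < length ps \<and> snd (ps ! j) \<longrightarrow> fst (ps ! i) \<noteq> fst (ps ! j))"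

definition osize :: "opart list \<Rightarrow> nat" where
  "osize ps = (\<Sum>p\<leftarrow>ps. fst p)"

definition G :: "nat \<Rightarrow> opart list set" where
  "G m = {ps. overpartition ps \<and> length ps = m \<and>
     (\<forall>i. Suc i < m \<longrightarrow>
        (let t = fst (ps ! Suc i) in ps ! i = (t + 1, True) \<or> ps ! i = (t + 2, False)))}"

definition bG :: "nat \<Rightarrow> nat \<Rightarrow> opart \<Rightarrow> rat fps" where
  "bG m j c = (\<Sum>ps\<in>{ps \<in> G m. Max (fst ` set ps) = j \<and> last ps = c}. fps_X ^ osize ps)"

definition qpoch :: "nat \<Rightarrow> rat fps" where
  "qpoch n = (\<Prod>i=1..n. 1 - fps_X ^ i)"

definition gauss_binom :: "nat \<Rightarrow> nat \<Rightarrow> rat fps" where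
  "gauss_binom M N = (if N \<le> M then qpoch M / (qpoch N * qpoch (M - N)) else 0)"

end

theory Submission
  imports Defs
begin

text \<open>Removing the largest part of a list in \<open>G (m + 1)\<close> whose largest part has size \<open>N\<close>
  leaves a list in \<open>G m\<close> whose largest part has size \<open>N - 1\<close> (if the removed part was
  overlined) or \<open>N - 2\<close> (if not), with the same smallest part. Hence
  \<open>b(m + 1, N, c) = q\<^sup>N (b(m, N - 1, c) + b(m, N - 2, c))\<close>, and the claimed closed form
  satisfies the same recurrence by the q-Pascal rule
  \<open>[M + 1, j] = q\<^sup>j [M, j] + [M, j - 1]\<close>.\<close>

fun G_list :: "opart list \<Rightarrow> bool" where
  "G_list [] = True"
| "G_list [p] = (fst p \<ge> 1)"
| "G_list (p # q # ps) = ((p = (fst q + 1, True) \<or> p = (fst q + 2, False)) \<and> G_list (q # ps))"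

lemma G_list_pos_sorted:
  "G_list ps \<Longrightarrow> (\<forall>x\<in>set ps. fst x \<ge> 1) \<and> sorted_wrt (\<lambda>a b. fst a > fst b) ps"
  by (induction ps rule: G_list.induct) auto

lemma G_list_hd_ge:
  "G_list ps \<Longrightarrow> x \<in> set ps \<Longrightarrow> fst x \<le> fst (hd ps)"
  by (induction ps rule: G_list.induct) auto

lemma Max_sizes_G_list: "G_list ps \<Longrightarrow> ps \<noteq> [] \<Longrightarrow> Max (fst ` set ps) = fst (hd ps)"
  by (intro Max_eqI) (auto intro: hd_in_set G_list_hd_ge)

lemma G_list_overpartition: "G_list ps \<Longrightarrow> overpartition ps"
proof -
  assume "G_list ps"
  then have pos: "\<forall>x\<in>set ps. fst x \<ge> 1" and dec: "sorted_wrt (\<lambda>a b. fst a > fst b) ps"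
    using G_list_pos_sorted by auto
  have "sorted_wrt (\<lambda>a b. part_key a \<ge> part_key b) ps"
    using dec by (rule sorted_wrt_mono_rel[rotated]) (auto simp: part_key_def)
  moreover have "\<forall>i j. i < j \<and> j < length ps \<and> snd (ps ! j) \<longrightarrow> fst (ps ! i) \<noteq> fst (ps ! j)"
    using sorted_wrt_nth_less[OF dec] by fastforce
  ultimately show ?thesis
    using pos unfolding overpartition_def by blast
qed

lemma G_list_iff_nth:
  "G_list ps \<longleftrightarrow> (\<forall>x\<in>set ps. fst x \<ge> 1) \<and> (\<forall>i. Suc i < length ps \<longrightarrow>
     (let t = fst (ps ! Suc i) in ps ! i = (t + 1, True) \<or> ps ! i = (t + 2, False)))"
  (is "_ \<longleftrightarrow> ?nth ps")
proof (induction ps rule: G_list.induct)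
  case (3 p q ps)
  have "?nth (p # q # ps) \<longleftrightarrow>
      (p = (fst q + 1, True) \<or> p = (fst q + 2, False)) \<and> ?nth (q # ps)"
    by (auto simp: Let_def less_Suc_eq_0_disj)
  then show ?case
    using "3.IH" by simp
qed auto

lemma G_eq_G_list: "G m = {ps. length ps = m \<and> G_list ps}"
  unfolding G_def using G_list_iff_nth G_list_overpartition unfolding overpartition_def
  by auto

lemma G_list_Cons:
  "ps \<noteq> [] \<Longrightarrow>
   G_list (p # ps) \<longleftrightarrow> G_list ps \<and> (p = (fst (hd ps) + 1, True) \<or> p = (fst (hd ps) + 2, False))"
  by (cases ps) auto

definition G_top_last :: "nat \<Rightarrow> nat \<Rightarrow> opart \<Rightarrow> opart list set" where
  "G_top_last m N c = {ps \<in> G m. Max (fst ` set ps) = N \<and> last ps = c}"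

lemma bG_eq_sum_G_top_last: "bG m N c = (\<Sum>ps\<in>G_top_last m N c. fps_X ^ osize ps)"
  by (simp add: bG_def G_top_last_def)

lemma finite_G_top_last: "finite (G_top_last m N c)"
proof (rule finite_subset)
  show "G_top_last m N c \<subseteq> {ps. set ps \<subseteq> {1..N} \<times> UNIV \<and> length ps = m}"
  proof
    fix ps assume "ps \<in> G_top_last m N c"
    then have "length ps = m" "G_list ps" "Max (fst ` set ps) = N"
      by (auto simp: G_top_last_def G_eq_G_list)
    then show "ps \<in> {ps. set ps \<subseteq> {1..N} \<times> UNIV \<and> length ps = m}"
      using G_list_pos_sorted Max_sizes_G_list G_list_hd_ge by fastforce
  qed
  show "finite {ps. set ps \<subseteq> {1..N} \<times> (UNIV :: bool set) \<and> length ps = m}"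
    by (rule finite_lists_length_eq) simp
qed

lemma G_top_last_Suc:
  assumes "m \<ge> 1"
  shows "G_top_last (Suc m) N c =
           Cons (N, True) ` {ps \<in> G m. Max (fst ` set ps) + 1 = N \<and> last ps = c}
         \<union> Cons (N, False) ` {ps \<in> G m. Max (fst ` set ps) + 2 = N \<and> last ps = c}"
    (is "_ = ?R")
proof (intro equalityI subsetI)
  fix ps assume "ps \<in> G_top_last (Suc m) N c"
  then have len: "length ps = Suc m" and "G_list ps" and top: "Max (fst ` set ps) = N"
    and "last ps = c"
    by (auto simp: G_top_last_def G_eq_G_list)
  moreover obtain p ps' where ps: "ps = p # ps'"
    using len by (cases ps) auto
  moreover have "ps' \<noteq> []"
    using len ps assms by auto
  ultimately show "ps \<in> ?R"
    using Max_sizes_G_list[of ps] Max_sizes_G_list[of ps'] G_list_Cons[of ps' p]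
    by (auto simp: G_eq_G_list)
next
  fix ps assume "ps \<in> ?R"
  then obtain p ps' where ps: "ps = p # ps'" and "G_list ps'" and len: "length ps' = m"
    and "last ps' = c"
    and p: "(p = (N, True) \<and> Max (fst ` set ps') + 1 = N) \<or>
            (p = (N, False) \<and> Max (fst ` set ps') + 2 = N)"
    by (auto simp: G_eq_G_list)
  moreover have ne: "ps' \<noteq> []"
    using len assms by auto
  moreover have "G_list ps"
    using ps ne p G_list_Cons \<open>G_list ps'\<close> Max_sizes_G_list by auto
  ultimately show "ps \<in> G_top_last (Suc m) N c"
    using Max_sizes_G_list[of ps] by (auto simp: G_top_last_def G_eq_G_list)
qed

lemma shifted_G_top_last:
  "{ps \<in> G m. Max (fst ` set ps) + d = N \<and> last ps = c} =
     (if d \<le> N then G_top_last m (N - d) c else {})"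
  by (auto simp: G_top_last_def)

lemma bG_Suc:
  assumes "m \<ge> 1"
  shows "bG (Suc m) N c = fps_X ^ N *
           ((if 1 \<le> N then bG m (N - 1) c else 0) + (if 2 \<le> N then bG m (N - 2) c else 0))"
proof -
  let ?A = "{ps \<in> G m. Max (fst ` set ps) + 1 = N \<and> last ps = c}"
  let ?B = "{ps \<in> G m. Max (fst ` set ps) + 2 = N \<and> last ps = c}"
  have fin: "finite ?A" "finite ?B"
    unfolding shifted_G_top_last by (simp_all add: finite_G_top_last)
  have "bG (Suc m) N c = (\<Sum>ps\<in>Cons (N, True) ` ?A. fps_X ^ osize ps)
                       + (\<Sum>ps\<in>Cons (N, False) ` ?B. fps_X ^ osize ps)"
    unfolding bG_eq_sum_G_top_last G_top_last_Suc[OF assms]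
    by (rule sum.union_disjoint) (use fin in auto)
  also have "\<dots> = (\<Sum>ps\<in>?A. fps_X ^ N * fps_X ^ osize ps) + (\<Sum>ps\<in>?B. fps_X ^ N * fps_X ^ osize ps)"
    by (simp add: sum.reindex inj_on_def osize_def power_add)
  also have "\<dots> = fps_X ^ N * ((\<Sum>ps\<in>?A. fps_X ^ osize ps) + (\<Sum>ps\<in>?B. fps_X ^ osize ps))"
    by (simp add: sum_distrib_left distrib_left)
  finally show ?thesis
    unfolding shifted_G_top_last by (simp add: bG_eq_sum_G_top_last)
qed

lemma bG_1:
  "bG 1 N (1, b) = (if N = 1 then fps_X else 0)"
proof -
  have "G 1 = {[p] | p. fst p \<ge> 1}"
    by (auto simp: G_eq_G_list length_Suc_conv)
  then have "G_top_last 1 N (1, b) = (if N = 1 then {[(1, b)]} else {})"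
    by (auto simp: G_top_last_def)
  then show ?thesis
    by (simp add: bG_eq_sum_G_top_last osize_def)
qed

fun qbinom :: "nat \<Rightarrow> nat \<Rightarrow> rat fps" where
  "qbinom M 0 = 1"
| "qbinom 0 (Suc N) = 0"
| "qbinom (Suc M) (Suc N) = fps_X ^ Suc N * qbinom M (Suc N) + qbinom M N"

lemma qbinom_eq_0: "M < N \<Longrightarrow> qbinom M N = 0"
  by (induction M N rule: qbinom.induct) auto

lemma qpoch_Suc: "qpoch (Suc n) = qpoch n * (1 - fps_X ^ Suc n)"
  by (simp add: qpoch_def)

lemma qpoch_nonzero: "qpoch n \<noteq> 0"
proof -
  have "fps_nth (qpoch n) 0 = 1"
    by (induction n) (simp_all add: qpoch_Suc, simp add: qpoch_def)
  then show ?thesis by auto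
qed

lemma qbinom_mult_qpoch: "N \<le> M \<Longrightarrow> qbinom M N * (qpoch N * qpoch (M - N)) = qpoch M"
proof (induction M arbitrary: N)
  case 0
  then show ?case by (simp add: qpoch_def)
next
  case (Suc M)
  show ?case
  proof (cases N)
    case 0
    then show ?thesis by (simp add: qpoch_def)
  next
    case (Suc K)
    have low: "qbinom M K * (qpoch (Suc K) * qpoch (M - K)) = qpoch M * (1 - fps_X ^ Suc K)"
      using Suc.IH[of K] Suc.prems \<open>N = Suc K\<close> by (simp add: qpoch_Suc algebra_simps)
    have high: "fps_X ^ Suc K * qbinom M (Suc K) * (qpoch (Suc K) * qpoch (M - K))
        = qpoch M * (fps_X ^ Suc K - fps_X ^ Suc M)"
    proof (cases "K = M")
      case True
      then show ?thesis by (simp add: qbinom_eq_0)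
    next
      case False
      then have le: "Suc K \<le> M"
        using Suc.prems \<open>N = Suc K\<close> by simp
      then have diff: "M - K = Suc (M - Suc K)"
        by simp
      have "fps_X ^ Suc K * qbinom M (Suc K) * (qpoch (Suc K) * qpoch (M - K))
          = fps_X ^ Suc K * (1 - fps_X ^ (M - K)) * (qbinom M (Suc K) * (qpoch (Suc K) * qpoch (M - Suc K)))"
        unfolding diff qpoch_Suc by (simp add: algebra_simps)
      also have "\<dots> = fps_X ^ Suc K * (1 - fps_X ^ (M - K)) * qpoch M"
        using Suc.IH[OF le] by simp
      also have "fps_X ^ Suc K * (1 - fps_X ^ (M - K)) = (fps_X ^ Suc K - fps_X ^ Suc M :: rat fps)"
        using le by (simp add: algebra_simps flip: power_add)
      finally show ?thesis by (simp add: algebra_simps)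
    qed
    have "qbinom (Suc M) N * (qpoch N * qpoch (Suc M - N))
        = fps_X ^ Suc K * qbinom M (Suc K) * (qpoch (Suc K) * qpoch (M - K))
          + qbinom M K * (qpoch (Suc K) * qpoch (M - K))"
      using \<open>N = Suc K\<close> by (simp add: algebra_simps)
    also have "\<dots> = qpoch M * (1 - fps_X ^ Suc M)"
      unfolding low high by (simp add: algebra_simps)
    also have "\<dots> = qpoch (Suc M)"
      by (simp add: qpoch_Suc)
    finally show ?thesis .
  qed
qed

lemma gauss_binom_eq_qbinom: "gauss_binom M N = qbinom M N"
proof (cases "N \<le> M")
  case True
  have "qpoch N * qpoch (M - N) \<noteq> 0"
    using qpoch_nonzero by simp
  then show ?thesis
    using True qbinom_mult_qpoch[OF True, symmetric] by (simp add: gauss_binom_def)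
next
  case False
  then show ?thesis by (simp add: gauss_binom_def qbinom_eq_0)
qed

lemma gauss_binom_eq_0: "M < N \<Longrightarrow> gauss_binom M N = 0"
  by (simp add: gauss_binom_def)

lemma gauss_binom_0_right: "gauss_binom M 0 = 1"
  by (simp add: gauss_binom_eq_qbinom)

lemma gauss_binom_Suc_Suc:
  "gauss_binom (Suc M) (Suc N) = fps_X ^ Suc N * gauss_binom M (Suc N) + gauss_binom M N"
  by (simp add: gauss_binom_eq_qbinom)

lemma bG_smallest_1:
  assumes "m \<ge> 1"
  shows "bG m N (1, b) = (if m \<le> N
           then fps_X ^ (((m + 1) choose 2) + ((N - m + 1) choose 2)) * gauss_binom (m - 1) (N - m)
           else 0)"
  using assms
proof (induction m arbitrary: N rule: nat_induct_at_least)
  case base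
  \<comment> \<open>the induction rule states its cases with \<open>Suc 0\<close> in place of the literal \<open>1\<close>\<close>
  note bG_Suc_0 = bG_1[unfolded One_nat_def]
  consider "N = 0" | "N = 1" | n where "N = Suc (Suc n)"
    by (cases N; cases "N - 1") auto
  then show ?case
  proof cases
    case 1
    then show ?thesis
      by (simp add: bG_Suc_0)
  next
    case 2
    then show ?thesis
      by (simp add: bG_Suc_0 gauss_binom_0_right choose_two)
  next
    case 3
    then show ?thesis
      by (simp add: bG_Suc_0 gauss_binom_eq_0)
  qed
next
  case (Suc m)
  note IH = Suc.IH[unfolded One_nat_def]
  obtain M where M: "m = Suc M"
    using Suc.hyps by (cases m) auto
  have "N < Suc m \<or> N = Suc m \<or> (\<exists>j. N = Suc m + Suc j)"
    by presburger
  then consider "N < Suc m" | "N = Suc m" | j where "N = Suc m + Suc j"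
    by blast
  then show ?case
  proof cases
    case 1
    then show ?thesis by (auto simp: bG_Suc[OF Suc.hyps] IH)
  next
    case 2
    then show ?thesis
      by (auto simp: bG_Suc[OF Suc.hyps] IH gauss_binom_0_right numeral_2_eq_2 power_add)
  next
    case 3
    have e1: "N + (((m + 1) choose 2) + ((Suc j + 1) choose 2))
        = (((Suc m + 1) choose 2) + ((Suc j + 1) choose 2)) + Suc j"
      and e2: "N + (((m + 1) choose 2) + ((j + 1) choose 2)) = ((Suc m + 1) choose 2) + ((Suc j + 1) choose 2)"
      using 3 by (simp_all add: numeral_2_eq_2)
    have "bG (Suc m) N (1, b) = fps_X ^ N * (bG m (Suc m + j) (1, b) + bG m (m + j) (1, b))"
      using 3 by (simp add: bG_Suc[OF Suc.hyps])
    also have "\<dots> = fps_X ^ (N + (((m + 1) choose 2) + ((Suc j + 1) choose 2))) * gauss_binom M (Suc j)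
          + fps_X ^ (N + (((m + 1) choose 2) + ((j + 1) choose 2))) * gauss_binom M j"
      using IH[of "Suc m + j"] IH[of "m + j"] M by (simp add: algebra_simps power_add)
    also have "\<dots> = fps_X ^ (((Suc m + 1) choose 2) + ((Suc j + 1) choose 2)) * gauss_binom m (Suc j)"
      unfolding e1 e2 by (simp add: M gauss_binom_Suc_Suc algebra_simps power_add)
    finally show ?thesis
      using 3 by simp
  qed
qed

theorem mainTheorem16:
  fixes m j :: nat
  assumes "m \<ge> 1"
  shows "bG m (m + j) (1, False) = fps_X ^ (((m + 1) choose 2) + ((j + 1) choose 2)) * gauss_binom (m - 1) j
       \<and> bG m (m + j) (1, True) = fps_X ^ (((m + 1) choose 2) + ((j + 1) choose 2)) * gauss_binom (m - 1) j"
  using bG_smallest_1[OF assms] by simp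

end
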